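(* Let $M\in\mathbb N$, $\alpha\in\mathbb N$, and let $f$ be a polynomial of degree at most $M$. Then $$\int_0^\pi f(\cos\vartheta)\sin^\alpha\vartheta\,d\vartheta=\sum_{u=0}^M\chi_u\, f\!\left(\cos\frac{u\pi}{M}\right),$$ where $\chi_u=\epsilon_u\,\omega_u$ with $\epsilon_0=\epsilon_M=\tfrac12$, $\epsilon_u=1$ for $u=1,\dots,M-1$ (and $\epsilon_{2\mu}$ defined by the same rule), and $$\omega_u=\frac{\pi\,\alpha!}{2^{\alpha-1}M}\sum_{\mu=0}^{\lfloor M/2\rfloor}\frac{\epsilon_{2\mu}(-1)^{\mu}\cos\frac{2\mu u\pi}{M}}{\Gamma\left(\frac{\alpha}{2}-\mu+1\right)\Gamma\left(\frac{\alpha}{2}+\mu+1\right)},$$ where a summand is understood to be $0$ whenever $\frac{\alpha}{2}-\mu+1$ is a non-positive integer (i.e. $1/\Gamma$ is taken to be $0$ at the poles of $\Gamma$).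
   Context: $\Gamma$ denotes the Euler Gamma function and $\lfloor\cdot\rfloor$ the integer part. *)

theory Defs
  imports "HOL-Analysis.Analysis" "HOL-Computational_Algebra.Polynomial"
begin

definition quad_eps :: "nat \<Rightarrow> nat \<Rightarrow> real" where
  "quad_eps M u = (if u = 0 \<or> u = M then 1/2 else 1)"

text \<open>omega weights; rGamma is the reciprocal Gamma function (0 at the poles).\<close>
definition quad_omega :: "nat \<Rightarrow> nat \<Rightarrow> nat \<Rightarrow> real" where
  "quad_omega M \<alpha> u =
     pi * fact \<alpha> / (2 powr (real \<alpha> - 1) * real M) *
     (\<Sum>\<mu> = 0..M div 2. quad_eps M (2*\<mu>) * (-1) ^ \<mu> * cos (real (2*\<mu>*u) * pi / real M)
        * rGamma (real \<alpha> / 2 - real \<mu> + 1) * rGamma (real \<alpha> / 2 + real \<mu> + 1))"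

definition quad_chi :: "nat \<Rightarrow> nat \<Rightarrow> nat \<Rightarrow> real" where
  "quad_chi M \<alpha> u = quad_eps M u * quad_omega M \<alpha> u"

end

theory Submission
  imports Defs
begin

(* The rule is exact for cos (k t), 0 \<le> k \<le> M. On the one hand,
   \<integral>_0^\<pi> cos (k t) sin^a t dt = \<pi> a! cos (k\<pi>/2) / (2^a \<Gamma>(1 + (a+k)/2) \<Gamma>(1 + (a-k)/2))
   for every real k, by induction on a in steps of two (sin^2 t = (1 - cos 2t)/2 and
   \<Gamma>(z+1) = z \<Gamma>(z)), with the reflection formula settling a = 0 and a = 1. On the other hand,
   the trapezoidal weights make cos (m u\<pi>/M), 0 \<le> m \<le> M, orthogonal on the nodes u\<pi>/M, so
   \<Sum>_u \<chi>_u cos (k u\<pi>/M) picks out the term \<mu> = k/2 of \<omega>_u, which is that closed form.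
   Finally cos^j t * cos (k t) reduces to cosines of frequency at most j + k by the product
   formula, so exactness extends to all polynomials in cos t of degree at most M. *)

lemma rGamma_reflection_real:
  "rGamma x * rGamma (1 - x) = sin (pi * x) / (pi :: real)"
proof -
  have "rGamma (1 - complex_of_real x) = complex_of_real (rGamma (1 - x))"
    by (metis of_real_1 of_real_diff rGamma_complex_of_real)
  then have "complex_of_real (rGamma x * rGamma (1 - x)) = complex_of_real (sin (pi * x) / pi)"
    using rGamma_reflection_complex[of "complex_of_real x"]
    by (simp add: rGamma_complex_of_real flip: sin_of_real)
  then show ?thesis
    by (simp only: of_real_eq_iff)
qed

lemma rGamma_pair_shift:
  fixes x y :: real
  shows "2 * (2 * x + 1) * (x + 1) * (rGamma (x + y + 2) * rGamma (x - y + 2))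
    = 2 * (rGamma (x + y + 1) * rGamma (x - y + 1))
      + rGamma (x + y + 2) * rGamma (x - y) + rGamma (x + y) * rGamma (x - y + 2)"
proof -
  have plus1: "rGamma z = z * rGamma (z + 1)" for z :: real
    by (rule rGamma_plus1[symmetric])
  have shifts: "rGamma (x + y + 1) = (x + y + 1) * rGamma (x + y + 2)"
       "rGamma (x - y + 1) = (x - y + 1) * rGamma (x - y + 2)"
       "rGamma (x - y) = (x - y) * ((x - y + 1) * rGamma (x - y + 2))"
       "rGamma (x + y) = (x + y) * ((x + y + 1) * rGamma (x + y + 2))"
    using plus1[of "x + y + 1"] plus1[of "x - y + 1"] plus1[of "x - y"] plus1[of "x + y"]
    by (simp_all add: add.assoc)
  show ?thesis
    unfolding shifts by (simp add: algebra_simps)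
qed

definition cos_sin_moment :: "nat \<Rightarrow> real \<Rightarrow> real" where
  "cos_sin_moment a k = pi * fact a / 2 ^ a * cos (k * pi / 2)
     * rGamma ((real a + k) / 2 + 1) * rGamma ((real a - k) / 2 + 1)"

lemma cos_sin_moment_double:
  "cos_sin_moment a (2 * y) = pi * fact a / 2 ^ a * cos (y * pi)
     * (rGamma (real a / 2 + y + 1) * rGamma (real a / 2 - y + 1))"
  by (simp add: cos_sin_moment_def add_divide_distrib diff_divide_distrib)

lemma cos_sin_moment_Suc_Suc:
  "cos_sin_moment (a + 2) k
     = cos_sin_moment a k / 2 - (cos_sin_moment a (k + 2) + cos_sin_moment a (k - 2)) / 4"
proof -
  define x y where "x = real a / 2" and "y = k / 2"
  define C where "C = pi * fact a / 2 ^ a * cos (y * pi)"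
  have k: "k = 2 * y" "k + 2 = 2 * (y + 1)" "k - 2 = 2 * (y - 1)"
    by (simp_all add: y_def)
  have factor: "pi * fact (a + 2) / 2 ^ (a + 2) = pi * fact a / 2 ^ a * ((2 * x + 1) * (x + 1) / 2)"
    by (simp add: x_def field_simps)
  have args: "real (a + 2) / 2 + y + 1 = x + y + 2" "real (a + 2) / 2 - y + 1 = x - y + 2"
    by (simp_all add: x_def)
  have lhs: "cos_sin_moment (a + 2) k
      = C * ((2 * x + 1) * (x + 1) / 2) * (rGamma (x + y + 2) * rGamma (x - y + 2))"
    unfolding k(1) cos_sin_moment_double factor args C_def by (simp only: mult_ac)
  have m0: "cos_sin_moment a k = C * (rGamma (x + y + 1) * rGamma (x - y + 1))"
    unfolding k(1) cos_sin_moment_double C_def x_def ..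
  have mp: "cos_sin_moment a (k + 2) = - C * (rGamma (x + y + 2) * rGamma (x - y))"
    unfolding k(2) cos_sin_moment_double C_def x_def by (simp add: distrib_right cos_add add_ac)
  have mm: "cos_sin_moment a (k - 2) = - C * (rGamma (x + y) * rGamma (x - y + 2))"
    unfolding k(3) cos_sin_moment_double C_def x_def
    by (simp add: left_diff_distrib cos_diff diff_add_eq add_ac)
  have "C * ((2 * x + 1) * (x + 1) / 2) * (rGamma (x + y + 2) * rGamma (x - y + 2))
      = C / 4 * (2 * (2 * x + 1) * (x + 1) * (rGamma (x + y + 2) * rGamma (x - y + 2)))"
    by simp
  also have "\<dots> = C / 4 * (2 * (rGamma (x + y + 1) * rGamma (x - y + 1))
      + rGamma (x + y + 2) * rGamma (x - y) + rGamma (x + y) * rGamma (x - y + 2))"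
    by (simp only: rGamma_pair_shift)
  also have "\<dots> = C * (rGamma (x + y + 1) * rGamma (x - y + 1)) / 2
      - (- C * (rGamma (x + y + 2) * rGamma (x - y)) + - C * (rGamma (x + y) * rGamma (x - y + 2))) / 4"
    by (simp add: field_simps)
  finally show ?thesis
    unfolding lhs m0 mp mm .
qed

lemma cos_sin_moment_0: "cos_sin_moment 0 k = (if k = 0 then pi else sin (k * pi) / k)"
proof -
  define y where "y = k / 2"
  have "y * rGamma (y + 1) * rGamma (1 - y) = sin (pi * y) / pi"
    by (simp only: rGamma_plus1 rGamma_reflection_real)
  then have "y * cos_sin_moment 0 k = cos (pi * y) * sin (pi * y)"
    by (simp add: cos_sin_moment_def y_def ac_simps diff_divide_distrib)
  also have "\<dots> = sin (k * pi) / 2"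
    using sin_double[of "pi * y"] by (simp add: y_def ac_simps)
  finally show ?thesis
    by (auto simp: y_def field_simps cos_sin_moment_def)
qed

lemma cos_sin_moment_1:
  "cos_sin_moment 1 k = (if \<bar>k\<bar> = 1 then 0 else (1 + cos (k * pi)) / (1 - k ^ 2))"
proof -
  define z where "z = (1 + k) / 2"
  define G where "G = rGamma (z + 1) * rGamma (1 - z + 1)"
  have "pi * z = pi / 2 + k * pi / 2"
    by (simp add: z_def field_simps)
  then have "sin (pi * z) = cos (k * pi / 2)"
    by (simp add: sin_add)
  moreover have "z * rGamma (z + 1) * ((1 - z) * rGamma (1 - z + 1)) = sin (pi * z) / pi"
    by (simp only: rGamma_plus1 rGamma_reflection_real)
  ultimately have G: "z * (1 - z) * G = cos (k * pi / 2) / pi"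
    by (simp add: G_def ac_simps)
  have moment: "cos_sin_moment 1 k = pi / 2 * cos (k * pi / 2) * G"
    by (simp add: cos_sin_moment_def G_def z_def add_divide_distrib diff_divide_distrib)
  have "(1 - k ^ 2) * cos_sin_moment 1 k = 2 * pi * cos (k * pi / 2) * (z * (1 - z) * G)"
    unfolding moment by (simp add: z_def field_simps power2_eq_square)
  also have "\<dots> = 2 * cos (k * pi / 2) ^ 2"
    by (simp add: G power2_eq_square)
  also have "\<dots> = 1 + cos (k * pi)"
    using cos_double_cos[of "k * pi / 2"] by simp
  finally have "(1 - k ^ 2) * cos_sin_moment 1 k = 1 + cos (k * pi)" .
  moreover have "cos_sin_moment 1 k = 0" if "\<bar>k\<bar> = 1"
    using that by (auto simp: cos_sin_moment_def abs_if split: if_splits)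
  moreover have "1 - k ^ 2 \<noteq> 0" if "\<bar>k\<bar> \<noteq> 1"
    using that abs_square_eq_1[of k] by auto
  ultimately show ?thesis
    by (auto simp: field_simps)
qed

lemma cos_sin_moment_odd:
  assumes "odd k"
  shows "cos_sin_moment a (real k) = 0"
proof -
  from assms obtain j where "k = 2 * j + 1"
    by (blast elim: oddE)
  then have angle: "real k * pi / 2 = real j * pi + pi / 2"
    by (simp add: field_simps)
  have "cos (real k * pi / 2) = 0"
    unfolding angle by (simp add: cos_add)
  then show ?thesis
    by (simp add: cos_sin_moment_def)
qed

lemma has_integral_cos_mult:
  assumes "k \<noteq> 0"
  shows "((\<lambda>t. cos (k * t)) has_integral sin (k * pi) / k) {0..pi}"
proof -
  have "((\<lambda>t. cos (k * t)) has_integral sin (k * pi) / k - sin (k * 0) / k) {0..pi}"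
    using assms
    by (intro fundamental_theorem_of_calculus)
       (auto intro!: derivative_eq_intros simp flip: has_real_derivative_iff_has_vector_derivative)
  then show ?thesis
    by simp
qed

lemma has_integral_sin_mult:
  assumes "k \<noteq> 0"
  shows "((\<lambda>t. sin (k * t)) has_integral (1 - cos (k * pi)) / k) {0..pi}"
proof -
  have "((\<lambda>t. sin (k * t)) has_integral - cos (k * pi) / k - - cos (k * 0) / k) {0..pi}"
    using assms
    by (intro fundamental_theorem_of_calculus)
       (auto intro!: derivative_eq_intros simp flip: has_real_derivative_iff_has_vector_derivative)
  then show ?thesis
    by (simp add: diff_divide_distrib)
qed

lemma has_integral_cos_mult_sin:
  "((\<lambda>t. cos (k * t) * sin t) has_integral cos_sin_moment 1 k) {0..pi}"
proof (cases "\<bar>k\<bar> = 1")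
  case True
  then have "(\<lambda>t. cos (k * t) * sin t) = (\<lambda>t. sin (2 * t) / 2)"
    by (auto simp: abs_if sin_double split: if_splits)
  moreover have "cos_sin_moment 1 k = 0"
    unfolding cos_sin_moment_1 using True by simp
  ultimately show ?thesis
    using has_integral_divide[OF has_integral_sin_mult[of 2], of 2] by simp
next
  case False
  then have "1 + k \<noteq> 0" "1 - k \<noteq> 0"
    by auto
  have "cos (k * t) * sin t = sin ((1 + k) * t) / 2 + sin ((1 - k) * t) / 2" for t
    using sin_times_cos[of t "k * t"] by (simp add: algebra_simps add_divide_distrib)
  then have integrand: "(\<lambda>t. cos (k * t) * sin t) = (\<lambda>t. sin ((1 + k) * t) / 2 + sin ((1 - k) * t) / 2)"
    by simp
  have cos_shift: "cos ((1 + k) * pi) = - cos (k * pi)" "cos ((1 - k) * pi) = - cos (k * pi)"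
    by (simp_all add: distrib_right left_diff_distrib cos_add cos_diff)
  have "cos_sin_moment 1 k = (1 + cos (k * pi)) / ((1 + k) * (1 - k))"
    unfolding cos_sin_moment_1 using False by (simp add: algebra_simps power2_eq_square)
  also have "\<dots> = (1 - cos ((1 + k) * pi)) / (1 + k) / 2 + (1 - cos ((1 - k) * pi)) / (1 - k) / 2"
    unfolding cos_shift using \<open>1 + k \<noteq> 0\<close> \<open>1 - k \<noteq> 0\<close> by (simp add: field_split_simps)
  finally have moment: "cos_sin_moment 1 k
      = (1 - cos ((1 + k) * pi)) / (1 + k) / 2 + (1 - cos ((1 - k) * pi)) / (1 - k) / 2" .
  show ?thesis
    unfolding integrand moment using \<open>1 + k \<noteq> 0\<close> \<open>1 - k \<noteq> 0\<close>
    by (intro has_integral_add has_integral_divide has_integral_sin_mult)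
qed

theorem has_integral_cos_mult_sin_power:
  "((\<lambda>t. cos (k * t) * sin t ^ a) has_integral cos_sin_moment a k) {0..pi}"
proof (induction a arbitrary: k rule: nat_induct2)
  case 0
  show ?case
    using has_integral_cos_mult[of k] has_integral_const_real[of "1 :: real" 0 pi]
    by (cases "k = 0") (auto simp: cos_sin_moment_0)
next
  case 1
  show ?case
    using has_integral_cos_mult_sin by simp
next
  case (step a)
  have integrand: "cos (k * t) * sin t ^ (a + 2) = cos (k * t) * sin t ^ a / 2
      - (cos ((k + 2) * t) * sin t ^ a + cos ((k - 2) * t) * sin t ^ a) / 4" for t
  proof -
    have sin_square: "sin t ^ 2 = (1 - cos (2 * t)) / 2"
      by (simp add: cos_double_sin)
    have "cos (k * t) * sin t ^ 2 = cos (k * t) / 2 - cos (k * t) * cos (2 * t) / 2"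
      unfolding sin_square by (simp add: algebra_simps diff_divide_distrib)
    also have "cos (k * t) * cos (2 * t) = (cos (k * t - 2 * t) + cos (k * t + 2 * t)) / 2"
      by (rule cos_times_cos)
    finally have sin_square_cos: "cos (k * t) * sin t ^ 2
        = cos (k * t) / 2 - (cos ((k + 2) * t) + cos ((k - 2) * t)) / 4"
      by (simp add: algebra_simps)
    have "cos (k * t) * sin t ^ (a + 2) = (cos (k * t) * sin t ^ 2) * sin t ^ a"
      by (simp only: power_add mult_ac)
    then show ?thesis
      unfolding sin_square_cos by (simp add: algebra_simps diff_divide_distrib add_divide_distrib)
  qed
  show ?case
    unfolding integrand cos_sin_moment_Suc_Suc
    by (intro has_integral_diff has_integral_add has_integral_divide step)
qed

lemma sum_quad_eps:
  assumes "M \<ge> 1"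
  shows "(\<Sum>u = 0..M. quad_eps M u * g u) = (\<Sum>u = 0..M. g u) - (g 0 + g M) / 2"
proof -
  have "quad_eps M u * g u = g u - (if u = 0 then g 0 / 2 else 0) - (if u = M then g M / 2 else 0)" for u
    using assms by (auto simp: quad_eps_def)
  then show ?thesis
    by (simp add: sum_subtractf add_divide_distrib)
qed

lemma sin_half_mult_sum_cos:
  "2 * sin (x / 2) * (\<Sum>u = 0..N. cos (real u * x)) = sin ((real N + 1 / 2) * x) + sin (x / 2)"
proof (induction N)
  case (Suc N)
  have "2 * sin (x / 2) * cos (real (Suc N) * x)
      = sin (x / 2 + real (Suc N) * x) + sin (x / 2 - real (Suc N) * x)"
    using sin_times_cos[of "x / 2" "real (Suc N) * x"] by simp
  also have "x / 2 + real (Suc N) * x = (real (Suc N) + 1 / 2) * x"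
    by (simp add: algebra_simps)
  also have "x / 2 - real (Suc N) * x = - ((real N + 1 / 2) * x)"
    by (simp add: algebra_simps)
  finally show ?case
    using Suc by (simp add: distrib_left)
qed simp

lemma sin_half_mult_sum_quad_eps_cos:
  assumes "M \<ge> 1"
  shows "2 * sin (x / 2) * (\<Sum>u = 0..M. quad_eps M u * cos (real u * x)) = sin (real M * x) * cos (x / 2)"
proof -
  have "2 * sin (x / 2) * (\<Sum>u = 0..M. quad_eps M u * cos (real u * x))
      = sin ((real M + 1 / 2) * x) + sin (x / 2) - sin (x / 2) * (1 + cos (real M * x))"
    unfolding sum_quad_eps[OF assms] sin_half_mult_sum_cos[symmetric] by (simp add: field_simps)
  also have "\<dots> = sin (real M * x) * cos (x / 2)"
    by (simp add: sin_add algebra_simps)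
  finally show ?thesis .
qed

lemma sum_quad_eps_cos:
  fixes n :: int
  assumes M: "M \<ge> 1"
  shows "(\<Sum>u = 0..M. quad_eps M u * cos (of_int n * (real u * pi / real M)))
    = (if 2 * int M dvd n then real M else 0)"
proof (cases "2 * int M dvd n")
  case True
  then obtain j where n: "n = 2 * int M * j" ..
  have "cos (of_int n * (real u * pi / real M)) = 1" for u
  proof -
    have "of_int n * (real u * pi / real M) = 2 * pi * of_int (j * int u)"
      using M by (simp add: n field_simps)
    then show ?thesis
      by (simp only: cos_int_2pin)
  qed
  then show ?thesis
    using True sum_quad_eps[OF M, of "\<lambda>_. 1"] by simp
next
  case False
  define x where "x = of_int n * pi / real M"
  have "sin (x / 2) \<noteq> 0"
  proof
    assume "sin (x / 2) = 0"
    then obtain i :: int where "x / 2 = of_int i * pi"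
      by (auto simp: sin_zero_iff_int2)
    then have "real_of_int n = real_of_int (2 * int M * i)"
      using M by (simp add: x_def field_simps)
    then have "n = 2 * int M * i"
      by (simp only: of_int_eq_iff)
    with False show False
      by simp
  qed
  have "2 * sin (x / 2) * (\<Sum>u = 0..M. quad_eps M u * cos (real u * x)) = sin (real M * x) * cos (x / 2)"
    by (rule sin_half_mult_sum_quad_eps_cos[OF M])
  also have "real M * x = of_int n * pi"
    using M by (simp add: x_def)
  also have "sin (of_int n * pi) = 0"
    using sin_zero_iff_int2 by blast
  finally have "2 * sin (x / 2) * (\<Sum>u = 0..M. quad_eps M u * cos (real u * x)) = 0"
    by simp
  moreover have "cos (of_int n * (real u * pi / real M)) = cos (real u * x)" for u
    by (simp add: x_def mult_ac)
  ultimately show ?thesis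
    using \<open>sin (x / 2) \<noteq> 0\<close> False by simp
qed

lemma quad_eps_cos_orthogonal:
  assumes M: "M \<ge> 1" and "m \<le> M" "k \<le> M"
  shows "quad_eps M m * (\<Sum>u = 0..M. quad_eps M u
      * (cos (real m * (real u * pi / real M)) * cos (real k * (real u * pi / real M))))
    = (if m = k then real M / 2 else 0)"
proof -
  define T where "T n = (\<Sum>u = 0..M. quad_eps M u * cos (of_int n * (real u * pi / real M)))" for n :: int
  have product: "cos (real m * y) * cos (real k * y)
      = (cos (of_int (int m - int k) * y) + cos (of_int (int m + int k) * y)) / 2" for y
    using cos_times_cos[of "real m * y" "real k * y"] by (simp add: algebra_simps)
  have sum: "(\<Sum>u = 0..M. quad_eps M u
      * (cos (real m * (real u * pi / real M)) * cos (real k * (real u * pi / real M))))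
    = (T (int m - int k) + T (int m + int k)) / 2"
    unfolding product T_def by (simp add: sum.distrib sum_divide_distrib distrib_left add_divide_distrib)
  have "\<bar>int m - int k\<bar> < 2 * int M" and sum_range: "int m + int k < 2 * int M \<or> m + k = 2 * M"
    using assms by auto
  then have "2 * int M dvd int m - int k \<longleftrightarrow> m = k"
    using dvd_imp_le_int[of "int m - int k" "2 * int M"] by auto
  moreover have "2 * int M dvd int m + int k \<longleftrightarrow> m = k \<and> (k = 0 \<or> k = M)"
    using sum_range assms dvd_imp_le_int[of "int m + int k" "2 * int M"] by (cases "m + k = 0") auto
  ultimately show ?thesis
    unfolding sum T_def sum_quad_eps_cos[OF M] using M by (auto simp: quad_eps_def)
qed

lemma sum_quad_chi_cos:
  assumes M: "M \<ge> 1" and k: "k \<le> M"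
  shows "(\<Sum>u = 0..M. quad_chi M a u * cos (real k * (real u * pi / real M))) = cos_sin_moment a (real k)"
proof -
  define c where "c j u = cos (real j * (real u * pi / real M))" for j u :: nat
  define B where "B \<mu> = (-1) ^ \<mu> * rGamma (real a / 2 - real \<mu> + 1) * rGamma (real a / 2 + real \<mu> + 1)"
    for \<mu> :: nat
  define K where "K = pi * fact a / (2 powr (real a - 1) * real M)"
  have omega: "quad_omega M a u = K * (\<Sum>\<mu> = 0..M div 2. B \<mu> * (quad_eps M (2 * \<mu>) * c (2 * \<mu>) u))" for u
    unfolding quad_omega_def K_def B_def c_def by (simp add: mult_ac)
  have "(\<Sum>u = 0..M. quad_chi M a u * c k u)
      = (\<Sum>u = 0..M. \<Sum>\<mu> = 0..M div 2.
          K * B \<mu> * (quad_eps M (2 * \<mu>) * (quad_eps M u * (c (2 * \<mu>) u * c k u))))"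
    unfolding quad_chi_def omega by (simp add: sum_distrib_left sum_distrib_right mult_ac)
  also have "\<dots> = (\<Sum>\<mu> = 0..M div 2. K * B \<mu> * (quad_eps M (2 * \<mu>)
          * (\<Sum>u = 0..M. quad_eps M u * (c (2 * \<mu>) u * c k u))))"
    by (subst sum.swap) (simp add: sum_distrib_left)
  also have "\<dots> = (\<Sum>\<mu> = 0..M div 2. if 2 * \<mu> = k then K * B \<mu> * (real M / 2) else 0)"
  proof (intro sum.cong refl)
    fix \<mu> assume "\<mu> \<in> {0..M div 2}"
    then have "2 * \<mu> \<le> M"
      by auto
    then have "quad_eps M (2 * \<mu>) * (\<Sum>u = 0..M. quad_eps M u * (c (2 * \<mu>) u * c k u))
        = (if 2 * \<mu> = k then real M / 2 else 0)"
      unfolding c_def by (rule quad_eps_cos_orthogonal[OF M _ k])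
    then show "K * B \<mu> * (quad_eps M (2 * \<mu>) * (\<Sum>u = 0..M. quad_eps M u * (c (2 * \<mu>) u * c k u)))
        = (if 2 * \<mu> = k then K * B \<mu> * (real M / 2) else 0)"
      by simp
  qed
  also have "\<dots> = cos_sin_moment a (real k)"
  proof (cases "even k")
    case True
    then obtain \<nu> where \<nu>: "k = 2 * \<nu>" ..
    have "2 powr (real a - 1) = 2 ^ a / 2"
      by (simp add: powr_diff powr_realpow)
    then have "K * B \<nu> * (real M / 2) = cos_sin_moment a (real k)"
      unfolding \<nu> of_nat_mult of_nat_numeral cos_sin_moment_double
      using M by (simp add: K_def B_def field_simps)
    moreover have "\<nu> \<in> {0..M div 2}"
      using k \<nu> by auto
    ultimately show ?thesis
      using \<nu> by simp
  next
    case False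
    then have "2 * \<mu> \<noteq> k" for \<mu>
      by auto
    with False show ?thesis
      by (simp add: cos_sin_moment_odd)
  qed
  finally show ?thesis
    unfolding c_def .
qed

definition quad_exact :: "nat \<Rightarrow> nat \<Rightarrow> (real \<Rightarrow> real) \<Rightarrow> bool" where
  "quad_exact M a g \<longleftrightarrow>
     ((\<lambda>t. g t * sin t ^ a) has_integral (\<Sum>u = 0..M. quad_chi M a u * g (real u * pi / real M))) {0..pi}"

lemma quad_exact_cos:
  assumes "M \<ge> 1" "k \<le> M"
  shows "quad_exact M a (\<lambda>t. cos (real k * t))"
  unfolding quad_exact_def sum_quad_chi_cos[OF assms] by (rule has_integral_cos_mult_sin_power)

lemma quad_exact_lincomb:
  assumes "quad_exact M a g" "quad_exact M a h"
  shows "quad_exact M a (\<lambda>t. x * g t + y * h t)"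
proof -
  have "((\<lambda>t. x * (g t * sin t ^ a) + y * (h t * sin t ^ a)) has_integral
      x * (\<Sum>u = 0..M. quad_chi M a u * g (real u * pi / real M))
      + y * (\<Sum>u = 0..M. quad_chi M a u * h (real u * pi / real M))) {0..pi}"
    using assms unfolding quad_exact_def by (intro has_integral_add has_integral_mult_right)
  then show ?thesis
    unfolding quad_exact_def by (simp add: algebra_simps sum.distrib sum_distrib_left)
qed

lemma quad_exact_sum:
  assumes "finite J" "\<And>j. j \<in> J \<Longrightarrow> quad_exact M a (g j)"
  shows "quad_exact M a (\<lambda>t. \<Sum>j\<in>J. c j * g j t)"
proof -
  have integral: "((\<lambda>t. \<Sum>j\<in>J. c j * (g j t * sin t ^ a)) has_integral
      (\<Sum>j\<in>J. c j * (\<Sum>u = 0..M. quad_chi M a u * g j (real u * pi / real M)))) {0..pi}"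
    using assms unfolding quad_exact_def by (intro has_integral_sum has_integral_mult_right) auto
  have integrand: "(\<lambda>t. (\<Sum>j\<in>J. c j * g j t) * sin t ^ a) = (\<lambda>t. \<Sum>j\<in>J. c j * (g j t * sin t ^ a))"
    by (simp add: sum_distrib_right mult.assoc)
  have "(\<Sum>u = 0..M. quad_chi M a u * (\<Sum>j\<in>J. c j * g j (real u * pi / real M)))
      = (\<Sum>u = 0..M. \<Sum>j\<in>J. c j * (quad_chi M a u * g j (real u * pi / real M)))"
    by (simp only: sum_distrib_left mult.left_commute)
  also have "\<dots> = (\<Sum>j\<in>J. \<Sum>u = 0..M. c j * (quad_chi M a u * g j (real u * pi / real M)))"
    by (rule sum.swap)
  also have "\<dots> = (\<Sum>j\<in>J. c j * (\<Sum>u = 0..M. quad_chi M a u * g j (real u * pi / real M)))"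
    by (simp only: sum_distrib_left)
  finally show ?thesis
    unfolding quad_exact_def integrand using integral by (simp only:)
qed

lemma quad_exact_cos_power_mult_cos:
  assumes "M \<ge> 1" "j + k \<le> M"
  shows "quad_exact M a (\<lambda>t. cos t ^ j * cos (real k * t))"
  using assms(2)
proof (induction j arbitrary: k)
  case 0
  then show ?case
    using quad_exact_cos[OF assms(1)] by simp
next
  case (Suc j)
  show ?case
  proof (cases k)
    case 0
    then show ?thesis
      using Suc.IH[of 1] Suc.prems by (simp add: mult.commute)
  next
    case (Suc k')
    have "cos t ^ Suc j * cos (real k * t)
        = 1 / 2 * (cos t ^ j * cos (real k' * t)) + 1 / 2 * (cos t ^ j * cos (real (k + 1) * t))" for t
    proof -
      have "cos t ^ Suc j * cos (real k * t) = cos t ^ j * (cos t * cos (real k * t))"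
        by (simp add: mult_ac)
      also have "cos t * cos (real k * t) = (cos (t - real k * t) + cos (t + real k * t)) / 2"
        by (rule cos_times_cos)
      also have "t - real k * t = - (real k' * t)"
        using Suc by (simp add: algebra_simps)
      also have "t + real k * t = real (k + 1) * t"
        by (simp add: algebra_simps)
      finally show ?thesis
        by (simp add: algebra_simps add_divide_distrib)
    qed
    then have "(\<lambda>t. cos t ^ Suc j * cos (real k * t))
        = (\<lambda>t. 1 / 2 * (cos t ^ j * cos (real k' * t)) + 1 / 2 * (cos t ^ j * cos (real (k + 1) * t)))"
      by (intro ext)
    then show ?thesis
      using Suc.prems \<open>k = Suc k'\<close> by (simp only:) (intro quad_exact_lincomb Suc.IH; simp)
  qed
qed

theorem lemma1:
  fixes M \<alpha> :: nat and f :: "real poly"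
  assumes "M \<ge> 1" and "degree f \<le> M"
  shows "integral {0..pi} (\<lambda>\<theta>. poly f (cos \<theta>) * sin \<theta> ^ \<alpha>)
           = (\<Sum>u = 0..M. quad_chi M \<alpha> u * poly f (cos (real u * pi / real M)))"
proof -
  have "quad_exact M \<alpha> (\<lambda>t. cos t ^ j)" if "j \<le> M" for j
    using quad_exact_cos_power_mult_cos[OF assms(1), of j 0] that by simp
  then have "quad_exact M \<alpha> (\<lambda>t. \<Sum>j\<le>degree f. coeff f j * cos t ^ j)"
    using assms(2) by (intro quad_exact_sum) auto
  then have "quad_exact M \<alpha> (\<lambda>t. poly f (cos t))"
    by (simp only: poly_altdef)
  then show ?thesis
    unfolding quad_exact_def by (rule integral_unique)
qed

end
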